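(* Let $\mathbf X$ be a periodic stationary process with period $1$, let $L$ be a first-time intrinsic location functional, and let $T\in(0,1]$. Then the càdlàg density of $L(\mathbf X,[0,T])$ on $(0,T)$ is non-increasing.
   Context: Let $H$ be a set of functions $\mathbb R\to\mathbb R$ with period $1$, invariant under shifts ($\theta_cg(x)=g(x+c)$), with the cylindrical $\sigma$-field; $\mathcal I$ is the set of compact intervals $[a,b]$, $a<b$. An intrinsic location functional is a map $L:H\times\mathcal I\to\mathbb R\cup\{\infty\}$ such that: (i) $L(\cdot,I)$ is measurable; (ii) $L(g,I)\in I\cup\{\infty\}$; (iii) $L(g,I)=L(\theta_cg,I-c)+c$ (with $\infty+c=\infty$); (iv) if $I_2\subseteq I_1$ and $L(g,I_1)\in I_2$ then $L(g,I_2)=L(g,I_1)$; (v) if $I_2\subseteq I_1$ and $L(g,I_2)\ne\infty$ then $L(g,I_1)\neq\infty$. A partially ordered random set representation of $L$ is an assignment, to each $g\in H$, of a set $S(g)\subseteq\mathbb R$ and a partial order $\preceq$ on $S(g)$ such that $S(g)=S(\theta_cg)+c$ for all $c$, $t_1\preceq t_2$ in $S(g)$ implies $t_1-c\preceq t_2-c$ in $S(\theta_cg)$, and for each $I\in\mathcal I$: if $S(g)\cap I=\emptyset$ then $L(g,I)=\infty$, otherwise $L(g,I)$ is the unique maximal element of $S(g)\cap I$ under $\preceq$. (Every intrinsic location functional has such a representation.) $L$ is a first-time intrinsic location functional if it has such a representation with the property that for all $t_1,t_2\in S(g)$, $t_1\le t_2$ implies $t_2\preceq t_1$. A periodic stationary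 process with period $1$ is a stationary process with continuous sample paths of period $1$ lying in $H$. *)

theory Defs
  imports "HOL-Probability.Probability"
begin

definition theta :: "real \<Rightarrow> (real \<Rightarrow> real) \<Rightarrow> (real \<Rightarrow> real)" where
  "theta c g = (\<lambda>x. g (x + c))"

abbreviation cyl :: "(real \<Rightarrow> real) measure" where
  "cyl \<equiv> PiM UNIV (\<lambda>_::real. (borel :: real measure))"

definition shift_inv_periodic_set :: "(real \<Rightarrow> real) set \<Rightarrow> bool" where
  "shift_inv_periodic_set H \<longleftrightarrow>
     (\<forall>g\<in>H. \<forall>x. g (x + 1) = g x) \<and> (\<forall>g\<in>H. \<forall>c. theta c g \<in> H)"

text \<open>Intrinsic location functional. The compact interval [a,b] (a<b) is
  given by its endpoints; the value PInf encodes infinity.\<close>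
definition intrinsic_location_functional ::
  "(real \<Rightarrow> real) set \<Rightarrow> ((real \<Rightarrow> real) \<Rightarrow> real \<Rightarrow> real \<Rightarrow> ereal) \<Rightarrow> bool" where
  "intrinsic_location_functional H L \<longleftrightarrow>
     (\<forall>a b. a < b \<longrightarrow> (\<lambda>g. L g a b) \<in> restrict_space cyl H \<rightarrow>\<^sub>M (borel :: ereal measure)) \<and>
     (\<forall>g\<in>H. \<forall>a b. a < b \<longrightarrow> L g a b = \<infinity> \<or> (\<exists>t. L g a b = ereal t \<and> a \<le> t \<and> t \<le> b)) \<and>
     (\<forall>g\<in>H. \<forall>a b c. a < b \<longrightarrow> L g a b = L (theta c g) (a - c) (b - c) + ereal c) \<and>
     (\<forall>g\<in>H. \<forall>a1 b1 a2 b2. a2 < b2 \<longrightarrow> a1 \<le> a2 \<longrightarrow> b2 \<le> b1 \<longrightarrow>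
        (\<exists>t. L g a1 b1 = ereal t \<and> a2 \<le> t \<and> t \<le> b2) \<longrightarrow> L g a2 b2 = L g a1 b1) \<and>
     (\<forall>g\<in>H. \<forall>a1 b1 a2 b2. a2 < b2 \<longrightarrow> a1 \<le> a2 \<longrightarrow> b2 \<le> b1 \<longrightarrow>
        L g a2 b2 \<noteq> \<infinity> \<longrightarrow> L g a1 b1 \<noteq> \<infinity>)"

definition po_random_set_rep ::
  "(real \<Rightarrow> real) set \<Rightarrow> ((real \<Rightarrow> real) \<Rightarrow> real \<Rightarrow> real \<Rightarrow> ereal) \<Rightarrow>
   ((real \<Rightarrow> real) \<Rightarrow> real set) \<Rightarrow> ((real \<Rightarrow> real) \<Rightarrow> real \<Rightarrow> real \<Rightarrow> bool) \<Rightarrow> bool" where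
  "po_random_set_rep H L S R \<longleftrightarrow>
     (\<forall>g\<in>H.
        (\<forall>t\<in>S g. R g t t) \<and>
        (\<forall>t1\<in>S g. \<forall>t2\<in>S g. R g t1 t2 \<longrightarrow> R g t2 t1 \<longrightarrow> t1 = t2) \<and>
        (\<forall>t1\<in>S g. \<forall>t2\<in>S g. \<forall>t3\<in>S g. R g t1 t2 \<longrightarrow> R g t2 t3 \<longrightarrow> R g t1 t3) \<and>
        (\<forall>c. S g = (\<lambda>t. t + c) ` S (theta c g)) \<and>
        (\<forall>c. \<forall>t1\<in>S g. \<forall>t2\<in>S g. R g t1 t2 \<longrightarrow> R (theta c g) (t1 - c) (t2 - c)) \<and>
        (\<forall>a b. a < b \<longrightarrow>
           (S g \<inter> {a..b} = {} \<longrightarrow> L g a b = \<infinity>) \<and>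
           (S g \<inter> {a..b} \<noteq> {} \<longrightarrow>
              (\<exists>t. L g a b = ereal t \<and> t \<in> S g \<inter> {a..b} \<and>
                   (\<forall>s\<in>S g \<inter> {a..b}. R g t s \<longrightarrow> s = t) \<and>
                   (\<forall>u\<in>S g \<inter> {a..b}. (\<forall>s\<in>S g \<inter> {a..b}. R g u s \<longrightarrow> s = u) \<longrightarrow> u = t)))))"

definition first_time_ILF ::
  "(real \<Rightarrow> real) set \<Rightarrow> ((real \<Rightarrow> real) \<Rightarrow> real \<Rightarrow> real \<Rightarrow> ereal) \<Rightarrow> bool" where
  "first_time_ILF H L \<longleftrightarrow> intrinsic_location_functional H L \<and>
     (\<exists>S R. po_random_set_rep H L S R \<and>
        (\<forall>g\<in>H. \<forall>t1\<in>S g. \<forall>t2\<in>S g. t1 \<le> t2 \<longrightarrow> R g t2 t1))"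

definition periodic_stationary_process ::
  "'a measure \<Rightarrow> ('a \<Rightarrow> real \<Rightarrow> real) \<Rightarrow> (real \<Rightarrow> real) set \<Rightarrow> bool" where
  "periodic_stationary_process M X H \<longleftrightarrow>
     prob_space M \<and> X \<in> M \<rightarrow>\<^sub>M cyl \<and>
     (\<forall>\<omega>\<in>space M. X \<omega> \<in> H \<and> continuous_on UNIV (X \<omega>) \<and> (\<forall>x. X \<omega> (x + 1) = X \<omega> x)) \<and>
     (\<forall>c. distr M cyl (\<lambda>\<omega>. theta c (X \<omega>)) = distr M cyl X)"

end

theory Submission
  imports Defs
begin

text \<open>For a first-time functional, \<open>L(X, [0, T])\<close> is the first point of the random set \<open>S\<close>
  in \<open>[0, T]\<close>, so it lies in \<open>(s, s + h]\<close> iff \<open>S\<close> has no point in \<open>[0, s]\<close> but one in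
  \<open>[0, s + h]\<close>. Shifting by \<open>s\<close> and using stationarity, this has the probability that \<open>S\<close>
  has no point in \<open>[-s, 0]\<close> but one in \<open>(0, h]\<close>, which decreases in \<open>s\<close>. Hence the
  distribution function of \<open>L\<close> has decreasing increments on \<open>(0, T)\<close>, i.e. it is concave
  there, and its right derivative is a non-increasing right-continuous density.\<close>

section \<open>Concave distribution functions\<close>

lemma increments_grid_lower:
  fixes F :: "real \<Rightarrow> real"
  assumes mono: "mono F"
    and incr: "\<And>s s' h. a < s \<Longrightarrow> s \<le> s' \<Longrightarrow> 0 < h \<Longrightarrow> s' + h < b \<Longrightarrow>
                 F (s' + h) - F s' \<le> F (s + h) - F s"
    and x: "a < x" and \<delta>: "0 < \<delta>" and m: "x + real m * \<delta> \<le> y" and y: "y < b"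
  shows "real m * (F y - F (y - \<delta>)) \<le> F y - F x"
proof -
  let ?p = "\<lambda>j. x + real j * \<delta>"
  have "real (card {..<m}) * (F y - F (y - \<delta>)) \<le> (\<Sum>j<m. F (?p (Suc j)) - F (?p j))"
  proof (rule sum_bounded_below)
    fix j assume "j \<in> {..<m}"
    then have "real j * \<delta> + \<delta> \<le> real m * \<delta>"
      using \<delta> mult_right_mono[of "real (Suc j)" "real m" \<delta>] by (simp add: algebra_simps)
    moreover have "0 \<le> real j * \<delta>"
      using \<delta> by simp
    ultimately have "F (y - \<delta> + \<delta>) - F (y - \<delta>) \<le> F (?p j + \<delta>) - F (?p j)"
      using x \<delta> m y by (intro incr) linarith+
    then show "F y - F (y - \<delta>) \<le> F (?p (Suc j)) - F (?p j)"
      by (simp add: algebra_simps)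
  qed
  also have "\<dots> = F (?p m) - F x"
    using sum_lessThan_telescope[of "\<lambda>j. F (?p j)" m] by simp
  also have "\<dots> \<le> F y - F x"
    using monoD[OF mono m] by simp
  finally show ?thesis by simp
qed

lemma increments_grid_upper:
  fixes F :: "real \<Rightarrow> real"
  assumes mono: "mono F"
    and incr: "\<And>s s' h. a < s \<Longrightarrow> s \<le> s' \<Longrightarrow> 0 < h \<Longrightarrow> s' + h < b \<Longrightarrow>
                 F (s' + h) - F s' \<le> F (s + h) - F s"
    and y: "a < y - \<delta>" and \<delta>: "0 < \<delta>" and k: "z \<le> y + real k * \<delta>" "y + real k * \<delta> < b"
  shows "F z - F y \<le> real k * (F y - F (y - \<delta>))"
proof -
  let ?p = "\<lambda>j. y + real j * \<delta>"
  have "F z - F y \<le> F (?p k) - F y"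
    using monoD[OF mono k(1)] by simp
  also have "\<dots> = (\<Sum>j<k. F (?p (Suc j)) - F (?p j))"
    using sum_lessThan_telescope[of "\<lambda>j. F (?p j)" k] by simp
  also have "\<dots> \<le> real (card {..<k}) * (F y - F (y - \<delta>))"
  proof (rule sum_bounded_above)
    fix j assume "j \<in> {..<k}"
    then have "real j * \<delta> + \<delta> \<le> real k * \<delta>"
      using \<delta> mult_right_mono[of "real (Suc j)" "real k" \<delta>] by (simp add: algebra_simps)
    moreover have "0 \<le> real j * \<delta>"
      using \<delta> by simp
    ultimately have "F (?p j + \<delta>) - F (?p j) \<le> F (y - \<delta> + \<delta>) - F (y - \<delta>)"
      using y \<delta> k by (intro incr) linarith+
    then show "F (?p (Suc j)) - F (?p j) \<le> F y - F (y - \<delta>)"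
      by (simp add: algebra_simps)
  qed
  finally show ?thesis by simp
qed

locale concave_mono_on_Ioo =
  fixes F :: "real \<Rightarrow> real" and a b :: real
  assumes mono: "mono F"
    and concave: "\<And>x y z. a < x \<Longrightarrow> x < y \<Longrightarrow> y < z \<Longrightarrow> z < b \<Longrightarrow>
                    (F z - F y) * (y - x) \<le> (F y - F x) * (z - y)"

text \<open>Comparing both increments with the increment \<open>d\<close> of \<open>F\<close> over \<open>[y - \<delta>, y]\<close>,
  counted on a grid of mesh \<open>\<delta>\<close>, gives the slope inequality up to an error \<open>O(\<delta>)\<close>.\<close>
lemma concave_mono_on_Ioo_of_antitone_increments:
  fixes F :: "real \<Rightarrow> real"
  assumes mono: "mono F"
    and incr: "\<And>s s' h. a < s \<Longrightarrow> s \<le> s' \<Longrightarrow> 0 < h \<Longrightarrow> s' + h < b \<Longrightarrow>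
                 F (s' + h) - F s' \<le> F (s + h) - F s"
  shows "concave_mono_on_Ioo F a b"
proof
  show "mono F" by (fact mono)
  fix x y z assume xyz: "a < x" "x < y" "y < z" "z < b"
  define A where "A = F y - F x"
  define B where "B = F z - F y"
  have AB: "0 \<le> A" "0 \<le> B"
    using xyz monoD[OF mono, of x y] monoD[OF mono, of y z] by (auto simp: A_def B_def)
  have approx: "B * (y - x) \<le> A * (z - y) + (A + B) * \<delta>"
    if \<delta>: "0 < \<delta>" "\<delta> \<le> y - x" "\<delta> \<le> b - z" for \<delta>
  proof -
    define d where "d = F y - F (y - \<delta>)"
    define m where "m = nat \<lfloor>(y - x) / \<delta>\<rfloor>"
    define k where "k = nat \<lceil>(z - y) / \<delta>\<rceil>"
    have "real m = of_int \<lfloor>(y - x) / \<delta>\<rfloor>" "real k = of_int \<lceil>(z - y) / \<delta>\<rceil>"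
      using \<delta> xyz by (auto simp: m_def k_def)
    then have m: "real m * \<delta> \<le> y - x" "y - x < real m * \<delta> + \<delta>"
      and k: "z - y \<le> real k * \<delta>" "real k * \<delta> < z - y + \<delta>"
      using floor_divide_lower[OF \<delta>(1), of "y - x"] floor_divide_upper[OF \<delta>(1), of "y - x"]
        ceiling_divide_upper[OF \<delta>(1), of "z - y"] ceiling_divide_lower[OF \<delta>(1), of "z - y"]
      by (simp_all add: algebra_simps)
    have "real m * d \<le> A"
      unfolding A_def d_def using m xyz \<delta>
      by (intro increments_grid_lower[OF mono incr]) auto
    have "B \<le> real k * d"
      unfolding B_def d_def using k xyz \<delta>
      by (intro increments_grid_upper[OF mono incr]) auto
    then have "B * real m \<le> real k * (real m * d)"
      using mult_right_mono[of B "real k * d" "real m"] by (simp add: ac_simps)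
    also have "\<dots> \<le> real k * A"
      using \<open>real m * d \<le> A\<close> by (simp add: mult_left_mono)
    finally have "B * real m * \<delta> \<le> real k * A * \<delta>"
      using \<delta> by (intro mult_right_mono) auto
    then have "B * (real m * \<delta>) \<le> A * (real k * \<delta>)"
      by (simp add: ac_simps)
    moreover have "B * (y - x) \<le> B * (real m * \<delta> + \<delta>)" "A * (real k * \<delta>) \<le> A * (z - y + \<delta>)"
      using AB m k by (simp_all add: mult_left_mono)
    ultimately show ?thesis
      by (simp only: distrib_left distrib_right)
  qed
  have "B * (y - x) \<le> A * (z - y)"
  proof (rule field_le_epsilon)
    fix e :: real assume e: "0 < e"
    define \<delta> where "\<delta> = min (min (y - x) (b - z)) (e / (A + B + 1))"
    have \<delta>: "0 < \<delta>" "\<delta> \<le> y - x" "\<delta> \<le> b - z"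
      using e xyz AB by (auto simp: \<delta>_def)
    have "(A + B) * \<delta> \<le> (A + B) * (e / (A + B + 1))"
      using AB by (intro mult_left_mono) (auto simp: \<delta>_def)
    also have "\<dots> \<le> e"
      using AB e by (simp add: field_simps)
    finally show "B * (y - x) \<le> A * (z - y) + e"
      using approx[OF \<delta>] by simp
  qed
  then show "(F z - F y) * (y - x) \<le> (F y - F x) * (z - y)"
    by (simp add: A_def B_def)
qed

text \<open>For concave \<open>F\<close> this is the right derivative of \<open>F\<close> at \<open>x\<close>.\<close>
definition right_slope :: "(real \<Rightarrow> real) \<Rightarrow> real \<Rightarrow> real \<Rightarrow> real" where
  "right_slope F b x = (SUP y\<in>{x<..<b}. (F y - F x) / (y - x))"

lemma antitone_has_left_limit:
  fixes f :: "real \<Rightarrow> real"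
  assumes anti: "\<And>u v. a < u \<Longrightarrow> u \<le> v \<Longrightarrow> v \<le> x \<Longrightarrow> f v \<le> f u" and x: "a < x"
  shows "\<exists>l. (f \<longlongrightarrow> l) (at_left x)"
proof
  have ne: "f ` {a<..<x} \<noteq> {}" and bdd: "bdd_below (f ` {a<..<x})"
    using x anti[of _ x] by (auto intro!: bdd_belowI2[where m = "f x"])
  show "(f \<longlongrightarrow> Inf (f ` {a<..<x})) (at_left x)"
  proof (rule order_tendstoI)
    fix l assume l: "l < Inf (f ` {a<..<x})"
    show "eventually (\<lambda>y. l < f y) (at_left x)"
      using eventually_at_left_real[OF x]
      by eventually_elim (use l cInf_lower[OF _ bdd] in force)
  next
    fix l assume "Inf (f ` {a<..<x}) < l"
    then obtain y0 where y0: "a < y0" "y0 < x" "f y0 < l"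
      using cInf_less_iff[OF ne bdd] by auto
    have "eventually (\<lambda>y. y \<in> {y0<..<x}) (at_left x)"
      using y0 by (intro eventually_at_left_real) auto
    then show "eventually (\<lambda>y. f y < l) (at_left x)"
    proof eventually_elim
      case (elim y)
      then show ?case using anti[of y0 y] y0 by simp
    qed
  qed
qed

context concave_mono_on_Ioo
begin

lemma slope_nonneg: "x < y \<Longrightarrow> 0 \<le> (F y - F x) / (y - x)"
  using monoD[OF mono, of x y] by simp

lemma slope_antitone:
  "a < x \<Longrightarrow> x < y \<Longrightarrow> y < z \<Longrightarrow> z < b \<Longrightarrow> (F z - F y) / (z - y) \<le> (F y - F x) / (y - x)"
  using concave[of x y z] by (simp add: divide_simps mult.commute)

lemma bdd_above_slopes: "a < x \<Longrightarrow> bdd_above ((\<lambda>y. (F y - F x) / (y - x)) ` {x<..<b})"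
  using slope_antitone[of "(a + x) / 2" x] by (intro bdd_aboveI2) auto

lemma slope_le_right_slope:
  "a < x \<Longrightarrow> x < y \<Longrightarrow> y < b \<Longrightarrow> (F y - F x) / (y - x) \<le> right_slope F b x"
  unfolding right_slope_def using bdd_above_slopes by (intro cSup_upper) auto

lemma right_slope_le_slope:
  assumes "a < x" "x < y" "y < b"
  shows "right_slope F b y \<le> (F y - F x) / (y - x)"
  unfolding right_slope_def using assms by (intro cSup_least) (auto intro: slope_antitone)

lemma right_slope_antitone: "a < x \<Longrightarrow> x \<le> y \<Longrightarrow> y < b \<Longrightarrow> right_slope F b y \<le> right_slope F b x"
  using right_slope_le_slope[of x y] slope_le_right_slope[of x y] by (cases "x = y") auto

lemma right_slope_nonneg: "a < x \<Longrightarrow> x < b \<Longrightarrow> 0 \<le> right_slope F b x"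
  using slope_nonneg[of x "(x + b) / 2"] slope_le_right_slope[of x "(x + b) / 2"] by simp

lemma increment_le_right_slope:
  "a < x \<Longrightarrow> x < y \<Longrightarrow> y < b \<Longrightarrow> F y - F x \<le> right_slope F b x * (y - x)"
  using slope_le_right_slope[of x y] by (simp add: divide_le_eq)

lemma right_slope_le_increment:
  "a < x \<Longrightarrow> x < y \<Longrightarrow> y < b \<Longrightarrow> right_slope F b y * (y - x) \<le> F y - F x"
  using right_slope_le_slope[of x y] by (simp add: le_divide_eq)

lemma tendsto_F_at_right:
  assumes "a < x" "x < b"
  shows "(F \<longlongrightarrow> F x) (at_right x)"
proof (rule tendsto_sandwich[where f = "\<lambda>_. F x" and h = "\<lambda>y. F x + right_slope F b x * (y - x)"])
  have "eventually (\<lambda>y. y \<in> {x<..<b}) (at_right x)"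
    using assms by (intro eventually_at_right_real)
  then show "eventually (\<lambda>y. F x \<le> F y) (at_right x)"
    and "eventually (\<lambda>y. F y \<le> F x + right_slope F b x * (y - x)) (at_right x)"
    by (eventually_elim; use monoD[OF mono] increment_le_right_slope assms in force)+
  have "((\<lambda>y. F x + right_slope F b x * (y - x)) \<longlongrightarrow> F x + right_slope F b x * (x - x)) (at_right x)"
    by (intro tendsto_intros)
  then show "((\<lambda>y. F x + right_slope F b x * (y - x)) \<longlongrightarrow> F x) (at_right x)"
    by simp
qed simp

lemma continuous_at_right_right_slope:
  assumes x: "a < x" "x < b"
  shows "continuous (at_right x) (right_slope F b)"
  unfolding continuous_within
proof (rule order_tendstoI)
  fix l assume l: "right_slope F b x < l"
  show "eventually (\<lambda>y. right_slope F b y < l) (at_right x)"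
    using eventually_at_right_real[OF x(2)]
  proof eventually_elim
    case (elim y)
    then show ?case using l right_slope_antitone[of x y] x by simp
  qed
next
  fix l assume "l < right_slope F b x"
  then obtain z where z: "x < z" "z < b" "l < (F z - F x) / (z - x)"
    unfolding right_slope_def using x less_cSup_iff[OF _ bdd_above_slopes] by auto
  have "((\<lambda>y. (F z - F y) / (z - y)) \<longlongrightarrow> (F z - F x) / (z - x)) (at_right x)"
    using z by (intro tendsto_intros tendsto_F_at_right x) auto
  then have "eventually (\<lambda>y. l < (F z - F y) / (z - y)) (at_right x)"
    using z(3) by (rule order_tendstoD)
  moreover have "eventually (\<lambda>y. y \<in> {x<..<z}) (at_right x)"
    using z by (intro eventually_at_right_real)
  ultimately show "eventually (\<lambda>y. l < right_slope F b y) (at_right x)"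
  proof eventually_elim
    case (elim y)
    then show ?case using slope_le_right_slope[of y z] x z by simp
  qed
qed

lemma right_slope_has_left_limit: "a < x \<Longrightarrow> x < b \<Longrightarrow> \<exists>l. (right_slope F b \<longlongrightarrow> l) (at_left x)"
  by (rule antitone_has_left_limit[of a]) (auto intro: right_slope_antitone)

lemma borel_measurable_right_slope:
  "(\<lambda>t. ennreal (right_slope F b t) * indicator {a<..<b} t) \<in> borel_measurable borel"
proof -
  have "mono_on {a<..<b} (\<lambda>t. - right_slope F b t)"
    by (auto simp: mono_on_def intro: right_slope_antitone)
  then have "(\<lambda>t. - (- right_slope F b t)) \<in> borel_measurable (restrict_space borel {a<..<b})"
    by (intro borel_measurable_uminus borel_measurable_mono_on_fnc)
  then have "(\<lambda>t. ennreal (right_slope F b t)) \<in> borel_measurable (restrict_space borel {a<..<b})"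
    by (intro measurable_compose[OF _ measurable_ennreal]) simp
  then show ?thesis
    by (subst (asm) borel_measurable_restrict_space_iff_ennreal) auto
qed

end

text \<open>Both increments are squeezed between the same Riemann-type sums of the monotone \<open>\<phi>\<close>;
  on a grid of \<open>n\<close> cells their total discrepancy telescopes to \<open>(\<phi> a - \<phi> b) (b - a) / n\<close>.\<close>
lemma increments_eq_of_antitone_bounds:
  fixes G1 G2 \<phi> :: "real \<Rightarrow> real"
  assumes ab: "a < b"
    and anti: "\<And>x y. a \<le> x \<Longrightarrow> x \<le> y \<Longrightarrow> y \<le> b \<Longrightarrow> \<phi> y \<le> \<phi> x"
    and G1: "\<And>x y. a \<le> x \<Longrightarrow> x < y \<Longrightarrow> y \<le> b \<Longrightarrow>
               \<phi> y * (y - x) \<le> G1 y - G1 x \<and> G1 y - G1 x \<le> \<phi> x * (y - x)"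
    and G2: "\<And>x y. a \<le> x \<Longrightarrow> x < y \<Longrightarrow> y \<le> b \<Longrightarrow>
               \<phi> y * (y - x) \<le> G2 y - G2 x \<and> G2 y - G2 x \<le> \<phi> x * (y - x)"
  shows "G1 b - G1 a = G2 b - G2 a"
proof -
  define D where "D x = G1 x - G2 x" for x
  define K where "K = (\<phi> a - \<phi> b) * (b - a)"
  have step: "\<bar>D y - D x\<bar> \<le> (\<phi> x - \<phi> y) * (y - x)" if "a \<le> x" "x < y" "y \<le> b" for x y
    using G1[OF that] G2[OF that] unfolding D_def left_diff_distrib abs_le_iff by linarith
  have bound: "\<bar>D b - D a\<bar> * real n \<le> K" if n: "n > 0" for n
  proof -
    define \<delta> where "\<delta> = (b - a) / real n"
    define p where "p i = a + real i * \<delta>" for i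
    have \<delta>: "0 < \<delta>" and p0: "p 0 = a" and pn: "p n = b"
      using ab n by (simp_all add: \<delta>_def p_def)
    have p_range: "a \<le> p i \<and> p i \<le> b" if "i \<le> n" for i
    proof -
      have "0 \<le> real i * \<delta>" "real i * \<delta> \<le> real n * \<delta>"
        using that \<delta> by (auto intro: mult_right_mono)
      then show ?thesis
        using pn unfolding p_def by linarith
    qed
    have "\<bar>D b - D a\<bar> = \<bar>\<Sum>i<n. D (p (Suc i)) - D (p i)\<bar>"
      using sum_lessThan_telescope[of "\<lambda>i. D (p i)" n] by (simp add: p0 pn)
    also have "\<dots> \<le> (\<Sum>i<n. \<bar>D (p (Suc i)) - D (p i)\<bar>)"
      by (rule sum_abs)
    also have "\<dots> \<le> (\<Sum>i<n. (\<phi> (p i) - \<phi> (p (Suc i))) * \<delta>)"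
    proof (rule sum_mono)
      fix i assume "i \<in> {..<n}"
      moreover have "p (Suc i) = p i + \<delta>"
        by (simp add: p_def algebra_simps)
      ultimately show "\<bar>D (p (Suc i)) - D (p i)\<bar> \<le> (\<phi> (p i) - \<phi> (p (Suc i))) * \<delta>"
        using step[of "p i" "p (Suc i)"] p_range[of i] p_range[of "Suc i"] \<delta> by simp
    qed
    also have "\<dots> = (\<phi> a - \<phi> b) * \<delta>"
      using sum_lessThan_telescope'[of "\<lambda>i. \<phi> (p i)" n] by (simp add: sum_distrib_right[symmetric] p0 pn)
    finally show ?thesis
      using n by (simp add: K_def \<delta>_def field_simps)
  qed
  have "\<bar>D b - D a\<bar> = 0"
  proof (rule ccontr)
    assume "\<bar>D b - D a\<bar> \<noteq> 0"
    then obtain n where n: "K < real n * \<bar>D b - D a\<bar>"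
      using ex_less_of_nat_mult[of "\<bar>D b - D a\<bar>" K] by auto
    moreover have "0 \<le> K"
      using anti[of a b] ab by (simp add: K_def)
    ultimately have "n > 0"
      by (cases n) auto
    with n bound show False
      by (simp add: mult.commute leD)
  qed
  then show ?thesis
    by (simp add: D_def)
qed

lemma nn_integral_Ioc_antitone_bounds:
  fixes f :: "real \<Rightarrow> real"
  assumes anti: "\<And>u v. x \<le> u \<Longrightarrow> u \<le> v \<Longrightarrow> v \<le> y \<Longrightarrow> f v \<le> f u"
    and nonneg: "0 \<le> f y" and xy: "x \<le> y"
  shows "ennreal (f y * (y - x)) \<le> (\<integral>\<^sup>+t. ennreal (f t) * indicator {x<..y} t \<partial>lborel)"
    and "(\<integral>\<^sup>+t. ennreal (f t) * indicator {x<..y} t \<partial>lborel) \<le> ennreal (f x * (y - x))"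
proof -
  have "0 \<le> f x"
    using anti[of x y] nonneg xy by simp
  have "ennreal (f y * (y - x)) = (\<integral>\<^sup>+t. ennreal (f y) * indicator {x<..y} t \<partial>lborel)"
    using nonneg xy by (simp add: ennreal_mult nn_integral_cmult_indicator)
  also have "\<dots> \<le> (\<integral>\<^sup>+t. ennreal (f t) * indicator {x<..y} t \<partial>lborel)"
    using anti by (intro nn_integral_mono) (auto simp: indicator_def intro: ennreal_leI)
  finally show "ennreal (f y * (y - x)) \<le> (\<integral>\<^sup>+t. ennreal (f t) * indicator {x<..y} t \<partial>lborel)" .
  have "(\<integral>\<^sup>+t. ennreal (f t) * indicator {x<..y} t \<partial>lborel)
      \<le> (\<integral>\<^sup>+t. ennreal (f x) * indicator {x<..y} t \<partial>lborel)"
    using anti by (intro nn_integral_mono) (auto simp: indicator_def intro: ennreal_leI)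
  also have "\<dots> = ennreal (f x * (y - x))"
    using \<open>0 \<le> f x\<close> xy by (simp add: ennreal_mult nn_integral_cmult_indicator)
  finally show "(\<integral>\<^sup>+t. ennreal (f t) * indicator {x<..y} t \<partial>lborel) \<le> ennreal (f x * (y - x))" .
qed

lemma increment_eq_nn_integral_of_antitone_bounds:
  fixes f F :: "real \<Rightarrow> real"
  assumes cd: "c < d"
    and meas: "(\<lambda>t. ennreal (f t) * indicator {c<..d} t) \<in> borel_measurable borel"
    and anti: "\<And>x y. c \<le> x \<Longrightarrow> x \<le> y \<Longrightarrow> y \<le> d \<Longrightarrow> f y \<le> f x"
    and nonneg: "0 \<le> f d"
    and bounds: "\<And>x y. c \<le> x \<Longrightarrow> x < y \<Longrightarrow> y \<le> d \<Longrightarrow>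
                   f y * (y - x) \<le> F y - F x \<and> F y - F x \<le> f x * (y - x)"
  shows "ennreal (F d - F c) = (\<integral>\<^sup>+t. ennreal (f t) * indicator {c<..d} t \<partial>lborel)"
proof -
  define I where "I x y = (\<integral>\<^sup>+t. ennreal (f t) * indicator {x<..y} t \<partial>lborel)" for x y
  have I_lower: "ennreal (f y * (y - x)) \<le> I x y"
    and I_upper: "I x y \<le> ennreal (f x * (y - x))" if "c \<le> x" "x \<le> y" "y \<le> d" for x y
    unfolding I_def using that anti[of y d] nonneg
    by (intro nn_integral_Ioc_antitone_bounds anti; force)+
  have I_finite: "I x y < \<infinity>" if "c \<le> x" "x \<le> y" "y \<le> d" for x y
    using I_upper[OF that] by (simp add: order_le_less_trans)
  have I_add: "I c y = I c x + I x y" if "c \<le> x" "x \<le> y" "y \<le> d" for x y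
  proof -
    let ?g = "\<lambda>t. ennreal (f t) * indicator {c<..d} t"
    have g_meas: "(\<lambda>t. ?g t * indicator A t) \<in> borel_measurable lborel" if "A \<in> sets borel" for A
      using borel_measurable_times_ennreal[OF meas borel_measurable_indicator[OF that]] by simp
    have "I c y = (\<integral>\<^sup>+t. ?g t * indicator {c<..x} t + ?g t * indicator {x<..y} t \<partial>lborel)"
      unfolding I_def using that by (intro nn_integral_cong) (auto simp: indicator_def)
    also have "\<dots> = (\<integral>\<^sup>+t. ?g t * indicator {c<..x} t \<partial>lborel) + (\<integral>\<^sup>+t. ?g t * indicator {x<..y} t \<partial>lborel)"
      by (intro nn_integral_add g_meas) auto
    also have "\<dots> = I c x + I x y"
      unfolding I_def using that by (intro arg_cong2[where f = "(+)"] nn_integral_cong) (auto simp: indicator_def)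
    finally show ?thesis .
  qed
  define G where "G x = enn2real (I c x)" for x
  have G_increment: "G y - G x = enn2real (I x y)" if "c \<le> x" "x < y" "y \<le> d" for x y
    using I_add[of x y] I_finite[of c x] I_finite[of x y] that by (simp add: G_def enn2real_plus)
  have "F d - F c = G d - G c"
  proof (rule increments_eq_of_antitone_bounds[OF cd anti bounds])
    fix x y assume xy: "c \<le> x" "x < y" "y \<le> d"
    have "0 \<le> f y * (y - x)" "0 \<le> f x * (y - x)"
      using xy anti[of y d] anti[of x d] nonneg by auto
    then show "f y * (y - x) \<le> G y - G x \<and> G y - G x \<le> f x * (y - x)"
      using enn2real_mono[OF I_lower[of x y]] enn2real_mono[OF I_upper[of x y]] I_finite[of x y] xy
      by (simp add: G_increment)
  qed auto
  also have "\<dots> = enn2real (I c d)"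
    using G_increment[of c d] cd by simp
  finally show ?thesis
    using I_finite[of c d] cd by (simp add: I_def)
qed

lemma emeasure_Ioo_eq_of_emeasure_Ioc_eq:
  fixes \<mu> \<nu> :: "real measure"
  assumes sets: "sets \<mu> = sets borel" "sets \<nu> = sets borel"
    and Ioc: "\<And>c d. a < c \<Longrightarrow> c < d \<Longrightarrow> d < b \<Longrightarrow> emeasure \<mu> {c<..d} = emeasure \<nu> {c<..d}"
    and cd: "a \<le> c" "c < d" "d \<le> b"
  shows "emeasure \<mu> {c<..<d} = emeasure \<nu> {c<..<d}"
proof -
  define A where "A n = {c + (d - c) / (real n + 3) <.. d - (d - c) / (real n + 3)}" for n :: nat
  have A_sets: "range A \<subseteq> sets borel"
    by (auto simp: A_def)
  have "incseq A"
  proof (rule incseq_SucI)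
    fix n
    have "(d - c) / (real (Suc n) + 3) \<le> (d - c) / (real n + 3)"
      using cd by (intro divide_left_mono) auto
    then show "A n \<subseteq> A (Suc n)"
      by (auto simp: A_def)
  qed
  have "(\<Union>n. A n) = {c<..<d}"
  proof (intro antisym subsetI)
    fix y assume "y \<in> (\<Union>n. A n)"
    then obtain n where "y \<in> A n" by auto
    moreover have "0 < (d - c) / (real n + 3)"
      using cd by simp
    ultimately show "y \<in> {c<..<d}"
      by (auto simp: A_def)
  next
    fix y assume y: "y \<in> {c<..<d}"
    define e where "e = min (y - c) (d - y)"
    have e: "0 < e" "e \<le> y - c" "e \<le> d - y"
      using y by (auto simp: e_def)
    then obtain n :: nat where "d - c < real n * e"
      using ex_less_of_nat_mult by blast
    also have "\<dots> \<le> (real n + 3) * e"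
      using e by (intro mult_right_mono) auto
    finally have "(d - c) / (real n + 3) < e"
      by (simp add: pos_divide_less_eq mult.commute)
    then have "y \<in> A n"
      using e unfolding A_def by auto
    then show "y \<in> (\<Union>n. A n)"
      by auto
  qed
  moreover have "emeasure \<mu> (A n) = emeasure \<nu> (A n)" for n
  proof -
    have "c * (1 + real n) < d * (1 + real n)"
      using cd by (intro mult_strict_right_mono) auto
    then have "0 < (d - c) / (real n + 3)" "2 * ((d - c) / (real n + 3)) < d - c"
      using cd by (simp_all add: field_simps)
    then show ?thesis
      unfolding A_def using cd by (intro Ioc) linarith+
  qed
  ultimately show ?thesis
    using SUP_emeasure_incseq[of A \<mu>] SUP_emeasure_incseq[of A \<nu>] A_sets \<open>incseq A\<close> sets by simp
qed

lemma emeasure_eq_on_subsets_of_Ioo: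
  fixes \<mu> \<nu> :: "real measure"
  assumes sets: "sets \<mu> = sets borel" "sets \<nu> = sets borel" and fin: "finite_measure \<mu>"
    and Ioc: "\<And>c d. a < c \<Longrightarrow> c < d \<Longrightarrow> d < b \<Longrightarrow> emeasure \<mu> {c<..d} = emeasure \<nu> {c<..d}"
    and B: "B \<in> sets borel" "B \<subseteq> {a<..<b}"
  shows "emeasure \<mu> B = emeasure \<nu> B"
proof -
  let ?restr = "\<lambda>M. density M (indicator {a<..<b})"
  have restr: "emeasure (?restr M) A = emeasure M ({a<..<b} \<inter> A)"
    if "sets M = sets borel" "A \<in> sets borel" for M :: "real measure" and A
    using emeasure_restricted[of "{a<..<b}" M A] that by simp
  have "?restr \<mu> = ?restr \<nu>"
  proof (rule measure_eqI_lessThan)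
    fix x
    show "emeasure (?restr \<mu>) {x<..} < \<infinity>"
      using restr[OF sets(1)] finite_measure.emeasure_finite[OF fin] by (simp add: top.not_eq_extremum)
    show "emeasure (?restr \<mu>) {x<..} = emeasure (?restr \<nu>) {x<..}"
    proof (cases "max a x < b")
      case True
      have "{a<..<b} \<inter> {x<..} = {max a x<..<b}"
        by auto
      then show ?thesis
        using restr[OF sets(1)] restr[OF sets(2)] True
        by (simp add: emeasure_Ioo_eq_of_emeasure_Ioc_eq[OF sets Ioc])
    next
      case False
      then have "{a<..<b} \<inter> {x<..} = {}"
        by auto
      then show ?thesis
        using restr[OF sets(1)] restr[OF sets(2)] by simp
    qed
  qed (use sets in simp_all)
  then show ?thesis
    using restr[OF sets(1) B(1)] restr[OF sets(2) B(1)] B(2) by (simp add: Int_absorb1)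
qed

theorem finite_measure_antitone_density:
  fixes \<nu> :: "real measure"
  assumes fin: "finite_measure \<nu>" and sets: "sets \<nu> = sets borel"
    and incr: "\<And>s s' h. a < s \<Longrightarrow> s \<le> s' \<Longrightarrow> 0 < h \<Longrightarrow> s' + h < b \<Longrightarrow>
                 measure \<nu> {s'<..s' + h} \<le> measure \<nu> {s<..s + h}"
  shows "\<exists>f. (\<forall>x\<in>{a<..<b}. 0 \<le> f x) \<and>
    (\<forall>x\<in>{a<..<b}. continuous (at_right x) f \<and> (\<exists>l. (f \<longlongrightarrow> l) (at_left x))) \<and>
    (\<forall>B\<in>sets borel. B \<subseteq> {a<..<b} \<longrightarrow> emeasure \<nu> B = (\<integral>\<^sup>+x. ennreal (f x) * indicator B x \<partial>lborel)) \<and>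
    (\<forall>x y. a < x \<longrightarrow> x \<le> y \<longrightarrow> y < b \<longrightarrow> f y \<le> f x)"
proof -
  interpret finite_measure \<nu> by (fact fin)
  define F where "F x = measure \<nu> {..x}" for x
  have "mono F"
    unfolding F_def using sets by (intro monoI finite_measure_mono) auto
  have F_Ioc: "measure \<nu> {x<..y} = F y - F x" if "x \<le> y" for x y
  proof -
    have "{x<..y} = {..y} - {..x}"
      by auto
    then show ?thesis
      unfolding F_def using that sets by (simp add: finite_measure_Diff)
  qed
  interpret concave_mono_on_Ioo F a b
    using incr F_Ioc by (intro concave_mono_on_Ioo_of_antitone_increments[OF \<open>mono F\<close>]) auto
  define f where "f = right_slope F b"
  define g where "g t = ennreal (f t) * indicator {a<..<b} t" for t
  have g_meas: "g \<in> borel_measurable borel"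
    unfolding g_def f_def by (fact borel_measurable_right_slope)
  have Ioc: "emeasure \<nu> {c<..d} = emeasure (density lborel g) {c<..d}"
    if cd: "a < c" "c < d" "d < b" for c d
  proof -
    have g_Ioc: "(\<lambda>t. ennreal (f t) * indicator {c<..d} t) = (\<lambda>t. g t * indicator {c<..d} t)"
      using cd by (auto simp: g_def indicator_def)
    moreover have "(\<lambda>t. g t * indicator {c<..d} t) \<in> borel_measurable borel"
      using g_meas by simp
    ultimately have "ennreal (F d - F c) = (\<integral>\<^sup>+t. ennreal (f t) * indicator {c<..d} t \<partial>lborel)"
      using cd unfolding f_def
      by (intro increment_eq_nn_integral_of_antitone_bounds)
        (auto intro: right_slope_antitone right_slope_nonneg right_slope_le_increment increment_le_right_slope)
    then show ?thesis
      using F_Ioc[of c d] cd g_meas g_Ioc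
      by (simp add: emeasure_eq_measure emeasure_density)
  qed
  have "emeasure \<nu> B = (\<integral>\<^sup>+x. ennreal (f x) * indicator B x \<partial>lborel)"
    if "B \<in> sets borel" "B \<subseteq> {a<..<b}" for B
  proof -
    have "(\<lambda>x. ennreal (f x) * indicator B x) = (\<lambda>x. g x * indicator B x)"
      using that(2) by (auto simp: fun_eq_iff g_def indicator_def)
    then show ?thesis
      using emeasure_eq_on_subsets_of_Ioo[OF sets _ fin Ioc that] g_meas that(1)
      by (simp add: emeasure_density)
  qed
  moreover note right_slope_nonneg continuous_at_right_right_slope right_slope_has_left_limit
    right_slope_antitone
  ultimately show ?thesis
    unfolding f_def by (intro exI[of _ "right_slope F b"]) auto
qed

section \<open>First-time location functionals\<close>

lemma po_random_set_rep_location: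
  assumes "po_random_set_rep H L S R" "g \<in> H" "a < b"
  shows "(S g \<inter> {a..b} = {} \<longrightarrow> L g a b = \<infinity>) \<and>
    (S g \<inter> {a..b} \<noteq> {} \<longrightarrow> (\<exists>t. L g a b = ereal t \<and> t \<in> S g \<inter> {a..b} \<and>
       (\<forall>s\<in>S g \<inter> {a..b}. R g t s \<longrightarrow> s = t) \<and>
       (\<forall>u\<in>S g \<inter> {a..b}. (\<forall>s\<in>S g \<inter> {a..b}. R g u s \<longrightarrow> s = u) \<longrightarrow> u = t)))"
  using assms(1)[unfolded po_random_set_rep_def, THEN bspec, OF assms(2),
      THEN conjunct2, THEN conjunct2, THEN conjunct2, THEN conjunct2, THEN conjunct2, rule_format, OF assms(3)] .

lemma po_random_set_rep_eq_infinity_iff: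
  assumes "po_random_set_rep H L S R" "g \<in> H" "a < b"
  shows "L g a b = \<infinity> \<longleftrightarrow> S g \<inter> {a..b} = {}"
  using po_random_set_rep_location[OF assms] by (metis PInfty_neq_ereal(2))

lemma po_random_set_rep_first_time_least:
  assumes rep: "po_random_set_rep H L S R" and first: "\<forall>t1\<in>S g. \<forall>t2\<in>S g. t1 \<le> t2 \<longrightarrow> R g t2 t1"
    and g: "g \<in> H" and ab: "a < b" and ne: "S g \<inter> {a..b} \<noteq> {}"
  shows "\<exists>r. L g a b = ereal r \<and> r \<in> S g \<inter> {a..b} \<and> (\<forall>u\<in>S g \<inter> {a..b}. r \<le> u)"
proof -
  obtain r where r: "L g a b = ereal r" "r \<in> S g \<inter> {a..b}"
    and maximal: "\<forall>u\<in>S g \<inter> {a..b}. R g r u \<longrightarrow> u = r"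
    using po_random_set_rep_location[OF rep g ab] ne by blast
  have "r \<le> u" if "u \<in> S g \<inter> {a..b}" for u
  proof (rule ccontr)
    assume "\<not> r \<le> u"
    then have "R g r u"
      using first r(2) that by auto
    then show False
      using maximal that \<open>\<not> r \<le> u\<close> by auto
  qed
  with r show ?thesis
    by blast
qed

lemma po_random_set_rep_first_time_in_Ioc_iff:
  assumes rep: "po_random_set_rep H L S R" and first: "\<forall>t1\<in>S g. \<forall>t2\<in>S g. t1 \<le> t2 \<longrightarrow> R g t2 t1"
    and g: "g \<in> H" and st: "a < s" "s < t" "t \<le> b"
  shows "L g a b \<in> ereal ` {s<..t} \<longleftrightarrow> S g \<inter> {a..s} = {} \<and> S g \<inter> {a..t} \<noteq> {}"
proof
  assume "L g a b \<in> ereal ` {s<..t}"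
  then obtain r where r: "L g a b = ereal r" "s < r" "r \<le> t"
    by auto
  then have "S g \<inter> {a..b} \<noteq> {}"
    using po_random_set_rep_eq_infinity_iff[OF rep g, of a b] st by simp
  then obtain r' where "L g a b = ereal r'" "r' \<in> S g \<inter> {a..b}" "\<forall>u\<in>S g \<inter> {a..b}. r' \<le> u"
    using po_random_set_rep_first_time_least[OF rep first g, of a b] st by auto
  with r have least: "r \<in> S g \<inter> {a..b}" "\<forall>u\<in>S g \<inter> {a..b}. r \<le> u"
    by auto
  have "S g \<inter> {a..s} = {}"
  proof (rule equals0I)
    fix u assume "u \<in> S g \<inter> {a..s}"
    moreover from this have "r \<le> u"
      using least(2) st by auto
    ultimately show False
      using r(2) by auto
  qed
  moreover have "r \<in> S g \<inter> {a..t}"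
    using least(1) r(3) by auto
  ultimately show "S g \<inter> {a..s} = {} \<and> S g \<inter> {a..t} \<noteq> {}"
    by blast
next
  assume gap: "S g \<inter> {a..s} = {} \<and> S g \<inter> {a..t} \<noteq> {}"
  then obtain u where u: "u \<in> S g" "a \<le> u" "u \<le> t"
    by auto
  then have "S g \<inter> {a..b} \<noteq> {}"
    using st by auto
  then obtain r where r: "L g a b = ereal r" "r \<in> S g \<inter> {a..b}" "\<forall>u\<in>S g \<inter> {a..b}. r \<le> u"
    using po_random_set_rep_first_time_least[OF rep first g, of a b] st by auto
  have "r \<le> u"
    using r(3) u st by auto
  moreover have "s < r"
    using gap r(2) by (auto simp: not_le[symmetric])
  ultimately show "L g a b \<in> ereal ` {s<..t}"
    using r(1) u(3) by auto
qed

lemma first_time_ILF_in_Ioc_iff: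
  assumes L: "first_time_ILF H L" and g: "g \<in> H" and st: "a < s" "s < t" "t \<le> b"
  shows "L g a b \<in> ereal ` {s<..t} \<longleftrightarrow> L g a s = \<infinity> \<and> L g a t \<noteq> \<infinity>"
proof -
  obtain S R where rep: "po_random_set_rep H L S R"
    and first: "\<forall>g\<in>H. \<forall>t1\<in>S g. \<forall>t2\<in>S g. t1 \<le> t2 \<longrightarrow> R g t2 t1"
    using L unfolding first_time_ILF_def by blast
  show ?thesis
    using po_random_set_rep_first_time_in_Ioc_iff[OF rep _ g st] first g st
      po_random_set_rep_eq_infinity_iff[OF rep g, of a s] po_random_set_rep_eq_infinity_iff[OF rep g, of a t]
    by simp
qed

text \<open>For \<open>L\<close> represented by \<open>S\<close>, the event that \<open>S g\<close> has no point in \<open>[-s, 0]\<close> but one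
  in \<open>[-s, h]\<close>: looking from time \<open>-s\<close>, the first point arrives in \<open>(0, h]\<close>.\<close>
definition arrival_event :: "((real \<Rightarrow> real) \<Rightarrow> real \<Rightarrow> real \<Rightarrow> ereal) \<Rightarrow> real \<Rightarrow> real \<Rightarrow> (real \<Rightarrow> real) set" where
  "arrival_event L s h = {g. L g (-s) 0 = \<infinity> \<and> L g (-s) h \<noteq> \<infinity>}"

context
  fixes H :: "(real \<Rightarrow> real) set" and L :: "(real \<Rightarrow> real) \<Rightarrow> real \<Rightarrow> real \<Rightarrow> ereal"
  assumes ILF: "intrinsic_location_functional H L"
begin

lemma location_eq_infinity_shift:
  assumes "g \<in> H" "a < b"
  shows "L g a b = \<infinity> \<longleftrightarrow> L (theta c g) (a - c) (b - c) = \<infinity>"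
proof -
  have "L g a b = L (theta c g) (a - c) (b - c) + ereal c"
    using ILF assms by (simp add: intrinsic_location_functional_def)
  then show ?thesis
    by (cases "L (theta c g) (a - c) (b - c)") auto
qed

lemma location_cases:
  assumes "g \<in> H" "a < b"
  shows "L g a b = \<infinity> \<or> (\<exists>t. L g a b = ereal t \<and> a \<le> t \<and> t \<le> b)"
proof -
  have "\<forall>g\<in>H. \<forall>a b. a < b \<longrightarrow> L g a b = \<infinity> \<or> (\<exists>t. L g a b = ereal t \<and> a \<le> t \<and> t \<le> b)"
    using ILF by (simp add: intrinsic_location_functional_def)
  with assms show ?thesis
    by blast
qed

lemma location_restrict:
  assumes "g \<in> H" "L g a1 b1 = ereal t" "a1 \<le> a2" "a2 < b2" "b2 \<le> b1" "a2 \<le> t" "t \<le> b2"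
  shows "L g a2 b2 = ereal t"
proof -
  have "\<forall>g\<in>H. \<forall>a1 b1 a2 b2. a2 < b2 \<longrightarrow> a1 \<le> a2 \<longrightarrow> b2 \<le> b1 \<longrightarrow>
        (\<exists>t. L g a1 b1 = ereal t \<and> a2 \<le> t \<and> t \<le> b2) \<longrightarrow> L g a2 b2 = L g a1 b1"
    using ILF by (simp add: intrinsic_location_functional_def)
  with assms show ?thesis
    by auto
qed

lemma location_eq_infinity_mono:
  assumes "g \<in> H" "L g a1 b1 = \<infinity>" "a1 \<le> a2" "a2 < b2" "b2 \<le> b1"
  shows "L g a2 b2 = \<infinity>"
proof -
  have "\<forall>g\<in>H. \<forall>a1 b1 a2 b2. a2 < b2 \<longrightarrow> a1 \<le> a2 \<longrightarrow> b2 \<le> b1 \<longrightarrow>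
        L g a2 b2 \<noteq> \<infinity> \<longrightarrow> L g a1 b1 \<noteq> \<infinity>"
    using ILF by (simp add: intrinsic_location_functional_def)
  with assms show ?thesis
    by blast
qed

lemma arrival_event_antimono:
  assumes g: "g \<in> H" and s: "0 < s" "s \<le> s'" and h: "0 < h" and arrival: "g \<in> arrival_event L s' h"
  shows "g \<in> arrival_event L s h"
proof -
  have none: "L g (-s') 0 = \<infinity>" and "L g (-s') h \<noteq> \<infinity>"
    using arrival unfolding arrival_event_def by simp_all
  then obtain t where t: "L g (-s') h = ereal t" "-s' \<le> t" "t \<le> h"
    using location_cases[OF g, of "-s'" h] h s by force
  have "0 < t"
  proof (rule ccontr)
    assume "\<not> 0 < t"
    then have "L g (-s') 0 = ereal t"
      using s h t by (intro location_restrict[OF g t(1)]) auto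
    with none show False
      by simp
  qed
  then have "L g (-s) h = ereal t"
    using s h t by (intro location_restrict[OF g t(1)]) auto
  moreover have "L g (-s) 0 = \<infinity>"
    using s h by (intro location_eq_infinity_mono[OF g none]) auto
  ultimately show ?thesis
    by (simp add: arrival_event_def)
qed

lemma arrival_event_measurable:
  assumes "0 < s" "0 < h"
  shows "H \<inter> arrival_event L s h \<in> sets (restrict_space cyl H)"
proof -
  let ?N = "restrict_space cyl H"
  have meas: "(\<lambda>g. L g (-s) c) \<in> ?N \<rightarrow>\<^sub>M (borel :: ereal measure)" if "-s < c" for c
    using ILF that by (simp add: intrinsic_location_functional_def)
  have "H \<inter> arrival_event L s h =
      ((\<lambda>g. L g (-s) 0) -` {\<infinity>} \<inter> space ?N) \<inter> ((\<lambda>g. L g (-s) h) -` (- {\<infinity>}) \<inter> space ?N)"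
    by (auto simp: arrival_event_def space_restrict_space space_PiM)
  also have "\<dots> \<in> sets ?N"
    using assms by (intro sets.Int measurable_sets[OF meas]) auto
  finally show ?thesis .
qed

end

section \<open>Stationary periodic processes\<close>

lemma measurable_theta: "theta c \<in> cyl \<rightarrow>\<^sub>M cyl"
proof -
  have "(\<lambda>g x. g (x + c)) \<in> cyl \<rightarrow>\<^sub>M cyl"
    by (rule measurable_PiM_single') (auto intro: measurable_component_singleton)
  then show ?thesis
    by (simp add: theta_def[abs_def])
qed

lemma periodic_stationary_process_measurable:
  assumes "periodic_stationary_process M X H"
  shows "X \<in> M \<rightarrow>\<^sub>M restrict_space cyl H"
  using assms by (intro measurable_restrict_space2) (auto simp: periodic_stationary_process_def)

lemma periodic_stationary_process_shift_prob:
  assumes H: "shift_inv_periodic_set H" and X: "periodic_stationary_process M X H"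
    and A: "A \<in> sets (restrict_space cyl H)"
  shows "measure M {\<omega>\<in>space M. theta c (X \<omega>) \<in> A} = measure M {\<omega>\<in>space M. X \<omega> \<in> A}"
proof -
  obtain A' where A': "A' \<in> sets cyl" "A = H \<inter> A'"
    using A by (auto simp: sets_restrict_space)
  have X_meas: "X \<in> M \<rightarrow>\<^sub>M cyl" and X_in_H: "\<And>\<omega>. \<omega> \<in> space M \<Longrightarrow> X \<omega> \<in> H"
    and stationary: "distr M cyl (\<lambda>\<omega>. theta c (X \<omega>)) = distr M cyl X"
    using X by (auto simp: periodic_stationary_process_def)
  have shift_in_H: "\<And>\<omega>. \<omega> \<in> space M \<Longrightarrow> theta c (X \<omega>) \<in> H"
    using H X_in_H by (auto simp: shift_inv_periodic_set_def)
  have shift_meas: "(\<lambda>\<omega>. theta c (X \<omega>)) \<in> M \<rightarrow>\<^sub>M cyl"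
    by (rule measurable_compose[OF X_meas measurable_theta])
  have "measure M {\<omega>\<in>space M. theta c (X \<omega>) \<in> A} = measure M ((\<lambda>\<omega>. theta c (X \<omega>)) -` A' \<inter> space M)"
    using A'(2) shift_in_H by (intro arg_cong[where f = "measure M"]) auto
  also have "\<dots> = measure (distr M cyl X) A'"
    using A'(1) shift_meas by (simp add: measure_distr flip: stationary)
  also have "\<dots> = measure M (X -` A' \<inter> space M)"
    using A'(1) X_meas by (simp add: measure_distr)
  also have "\<dots> = measure M {\<omega>\<in>space M. X \<omega> \<in> A}"
    using A'(2) X_in_H by (intro arg_cong[where f = "measure M"]) auto
  finally show ?thesis .
qed

text \<open>Shifting by \<open>s\<close> turns \<open>L \<in> (s, s + h]\<close> into an arrival event seen from time \<open>-s\<close>.\<close>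
lemma prob_first_time_location_in_Ioc:
  assumes H: "shift_inv_periodic_set H" and X: "periodic_stationary_process M X H"
    and L: "first_time_ILF H L" and sh: "0 < s" "0 < h" "s + h \<le> T"
  shows "measure M {\<omega>\<in>space M. L (X \<omega>) 0 T \<in> ereal ` {s<..s + h}}
       = measure M {\<omega>\<in>space M. X \<omega> \<in> H \<inter> arrival_event L s h}"
proof -
  have ILF: "intrinsic_location_functional H L"
    using L by (simp add: first_time_ILF_def)
  have "L g 0 T \<in> ereal ` {s<..s + h} \<longleftrightarrow> theta s g \<in> H \<inter> arrival_event L s h" if "g \<in> H" for g
    using first_time_ILF_in_Ioc_iff[OF L that, of 0 s "s + h" T] sh H that
      location_eq_infinity_shift[OF ILF that, of 0 s s] location_eq_infinity_shift[OF ILF that, of 0 "s + h" s]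
    by (auto simp: arrival_event_def shift_inv_periodic_set_def)
  then have "{\<omega>\<in>space M. L (X \<omega>) 0 T \<in> ereal ` {s<..s + h}}
      = {\<omega>\<in>space M. theta s (X \<omega>) \<in> H \<inter> arrival_event L s h}"
    using X by (auto simp: periodic_stationary_process_def)
  then show ?thesis
    using periodic_stationary_process_shift_prob[OF H X arrival_event_measurable[OF ILF sh(1,2)]] by simp
qed

lemma prob_first_time_location_in_Ioc_antitone:
  assumes H: "shift_inv_periodic_set H" and X: "periodic_stationary_process M X H"
    and L: "first_time_ILF H L" and s: "0 < s" "s \<le> s'" and h: "0 < h" "s' + h \<le> T"
  shows "measure M {\<omega>\<in>space M. L (X \<omega>) 0 T \<in> ereal ` {s'<..s' + h}}
       \<le> measure M {\<omega>\<in>space M. L (X \<omega>) 0 T \<in> ereal ` {s<..s + h}}"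
proof -
  interpret prob_space M
    using X by (simp add: periodic_stationary_process_def)
  have ILF: "intrinsic_location_functional H L"
    using L by (simp add: first_time_ILF_def)
  have "{\<omega>\<in>space M. X \<omega> \<in> H \<inter> arrival_event L s h} \<in> sets M"
    using measurable_sets[OF periodic_stationary_process_measurable[OF X] arrival_event_measurable[OF ILF s(1) h(1)]]
    by (simp add: vimage_def Int_def conj_commute)
  moreover have "{\<omega>\<in>space M. X \<omega> \<in> H \<inter> arrival_event L s' h} \<subseteq> {\<omega>\<in>space M. X \<omega> \<in> H \<inter> arrival_event L s h}"
    using arrival_event_antimono[OF ILF _ s h(1)] by blast
  ultimately show ?thesis
    using prob_first_time_location_in_Ioc[OF H X L] s h by (simp add: finite_measure_mono)
qed

lemma real_of_ereal_in_iff: "0 \<notin> B \<Longrightarrow> real_of_ereal e \<in> B \<longleftrightarrow> e \<in> ereal ` B"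
  by (cases e) auto

lemma borel_measurable_location:
  assumes X: "periodic_stationary_process M X H" and L: "intrinsic_location_functional H L" and "a < b"
  shows "(\<lambda>\<omega>. real_of_ereal (L (X \<omega>) a b)) \<in> borel_measurable M"
  using L \<open>a < b\<close> unfolding intrinsic_location_functional_def
  by (intro borel_measurable_real_of_ereal measurable_compose[OF periodic_stationary_process_measurable[OF X]]) auto

lemma emeasure_location_in:
  assumes X: "periodic_stationary_process M X H" and L: "intrinsic_location_functional H L" and "a < b"
    and B: "B \<in> sets borel" "0 \<notin> B"
  shows "emeasure M {\<omega>\<in>space M. L (X \<omega>) a b \<in> ereal ` B}
       = emeasure (distr M borel (\<lambda>\<omega>. real_of_ereal (L (X \<omega>) a b))) B"
proof -
  have "{\<omega>\<in>space M. L (X \<omega>) a b \<in> ereal ` B} = (\<lambda>\<omega>. real_of_ereal (L (X \<omega>) a b)) -` B \<inter> space M"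
    using real_of_ereal_in_iff[OF B(2)] by auto
  then show ?thesis
    using B(1) borel_measurable_location[OF assms(1-3)] by (simp add: emeasure_distr)
qed

theorem mainTheorem10:
  fixes M :: "'a measure" and X :: "'a \<Rightarrow> real \<Rightarrow> real"
    and H :: "(real \<Rightarrow> real) set"
    and L :: "(real \<Rightarrow> real) \<Rightarrow> real \<Rightarrow> real \<Rightarrow> ereal" and T :: real
  assumes "shift_inv_periodic_set H"
    and "periodic_stationary_process M X H"
    and "first_time_ILF H L"
    and "0 < T" and "T \<le> 1"
  shows "\<exists>f :: real \<Rightarrow> real.
           (\<forall>x\<in>{0<..<T}. 0 \<le> f x) \<and>
           (\<forall>x\<in>{0<..<T}. continuous (at_right x) f \<and> (\<exists>l. (f \<longlongrightarrow> l) (at_left x))) \<and>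
           (\<forall>B\<in>sets borel. B \<subseteq> {0<..<T} \<longrightarrow>
              emeasure M {\<omega>\<in>space M. L (X \<omega>) 0 T \<in> ereal ` B}
                = (\<integral>\<^sup>+ x. ennreal (f x) * indicator B x \<partial>lborel)) \<and>
           (\<forall>x y. 0 < x \<longrightarrow> x \<le> y \<longrightarrow> y < T \<longrightarrow> f y \<le> f x)"
proof -
  note H = assms(1) and X = assms(2) and L = assms(3)
  have ILF: "intrinsic_location_functional H L"
    using L by (simp add: first_time_ILF_def)
  define \<nu> where "\<nu> = distr M borel (\<lambda>\<omega>. real_of_ereal (L (X \<omega>) 0 T))"
  have location: "emeasure M {\<omega>\<in>space M. L (X \<omega>) 0 T \<in> ereal ` B} = emeasure \<nu> B"
    if "B \<in> sets borel" "0 \<notin> B" for B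
    using emeasure_location_in[OF X ILF \<open>0 < T\<close> that] by (simp add: \<nu>_def)
  have "finite_measure \<nu>"
    using X prob_space.prob_space_distr[OF _ borel_measurable_location[OF X ILF \<open>0 < T\<close>]]
    unfolding \<nu>_def periodic_stationary_process_def prob_space_def by blast
  moreover have "measure \<nu> {s'<..s' + h} \<le> measure \<nu> {s<..s + h}"
    if "0 < s" "s \<le> s'" "0 < h" "s' + h < T" for s s' h
    using prob_first_time_location_in_Ioc_antitone[OF H X L that(1-3), of T] that
      location[of "{s<..s + h}"] location[of "{s'<..s' + h}"] by (simp add: measure_def)
  ultimately obtain f where "\<forall>x\<in>{0<..<T}. 0 \<le> f x"
    "\<forall>x\<in>{0<..<T}. continuous (at_right x) f \<and> (\<exists>l. (f \<longlongrightarrow> l) (at_left x))"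
    "\<forall>B\<in>sets borel. B \<subseteq> {0<..<T} \<longrightarrow> emeasure \<nu> B = (\<integral>\<^sup>+x. ennreal (f x) * indicator B x \<partial>lborel)"
    "\<forall>x y. 0 < x \<longrightarrow> x \<le> y \<longrightarrow> y < T \<longrightarrow> f y \<le> f x"
    using finite_measure_antitone_density[of \<nu> 0 T] by (auto simp: \<nu>_def)
  moreover have "0 \<notin> B" if "B \<subseteq> {0<..<T}" for B
    using that by auto
  ultimately show ?thesis
    using location by (intro exI[of _ f]) auto
qed

end
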